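(* Let $r_n\to\infty$ and let $\{c_{s,n}\}_{n\ge1,1\le s\le r_n}$ be a triangular array of reals such that (a) $|c_{1,n}|\ge|c_{2,n}|\ge\cdots\ge|c_{r_n,n}|$ for each $n$ and $\sup_n\sum_{s=1}^{r_n}c_{s,n}^2\le L$ for some $L>0$; (b) $\lim_{n\to\infty}c_{s,n}=c_s$ for each $s\ge1$; (c) $\lim_{K\to\infty}\limsup_{n\to\infty}\sum_{s=K+1}^{r_n}c_{s,n}^2=\lim_{K\to\infty}\liminf_{n\to\infty}\sum_{s=K+1}^{r_n}c_{s,n}^2=\rho^2$ (with $\rho\ge0$). Let $\{Y_s\}_{s\ge1}$ be i.i.d. with mean $0$ and variance $1$, and $X_n:=\sum_{s=1}^{r_n}c_{s,n}Y_s$. Then $\sum_{s=1}^\infty c_sY_s$ is a well-defined random variable and $X_n$ converges weakly to $X:=\sum_{s=1}^\infty c_sY_s+\rho Z$, where $Z\sim N(0,1)$ is independent of $\{Y_s\}$. *)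

theory Defs
  imports "HOL-Probability.Probability"
begin

end

theory Submission
  imports Defs
begin

(* Since the c_{s,n} converge to c_s and their squares sum to at most L, also the c_s^2 sum
   to at most L, and Kolmogorov's maximal inequality makes the series sum_s c_s Y_s converge
   almost surely.

   Weak convergence follows from Levy's continuity theorem. With phi the characteristic
   function of Y_1, the characteristic function of X_n is prod_{s <= r_n} phi (t c_{s,n}).
   For fixed K the head prod_{s <= K} tends to the characteristic function of
   sum_{s <= K} c_s Y_s, and these tend to that of the series as K grows. Because the
   |c_{s,n}| decrease, c_{s,n}^2 <= L/K for s > K, so by a Lindeberg-type estimate the tail
   prod_{K < s <= r_n} is close to exp (-t^2 V_{n,K} / 2) with V_{n,K} = sum_{s > K} c_{s,n}^2,
   uniformly in n up to an error vanishing as K grows; and V_{n,K} tends to rho^2 when first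
   n and then K go to infinity. *)

section \<open>Kolmogorov's maximal inequality\<close>

lemma integrable_mult_of_square_integrable:
  fixes f g :: "'a \<Rightarrow> real"
  assumes [measurable]: "f \<in> borel_measurable M" "g \<in> borel_measurable M"
    and "integrable M (\<lambda>x. (f x)\<^sup>2)" "integrable M (\<lambda>x. (g x)\<^sup>2)"
  shows "integrable M (\<lambda>x. f x * g x)"
proof (rule Bochner_Integration.integrable_bound[where f="\<lambda>x. (f x)\<^sup>2 + (g x)\<^sup>2"])
  show "integrable M (\<lambda>x. (f x)\<^sup>2 + (g x)\<^sup>2)" using assms by auto
  show "AE x in M. norm (f x * g x) \<le> norm ((f x)\<^sup>2 + (g x)\<^sup>2)"
  proof (rule AE_I2)
    fix x
    have "2 * (\<bar>f x\<bar> * \<bar>g x\<bar>) \<le> (f x)\<^sup>2 + (g x)\<^sup>2"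
      using sum_squares_bound[of "\<bar>f x\<bar>" "\<bar>g x\<bar>"] by (simp add: mult.assoc)
    then show "norm (f x * g x) \<le> norm ((f x)\<^sup>2 + (g x)\<^sup>2)"
      by (simp add: abs_mult) (smt (verit) zero_le_mult_iff abs_ge_zero)
  qed
qed simp

lemma integrable_square_sum:
  fixes f :: "'i \<Rightarrow> 'a \<Rightarrow> real"
  assumes "finite B" "\<And>i. i \<in> B \<Longrightarrow> f i \<in> borel_measurable M"
    and "\<And>i. i \<in> B \<Longrightarrow> integrable M (\<lambda>x. (f i x)\<^sup>2)"
  shows "integrable M (\<lambda>x. (\<Sum>i\<in>B. f i x)\<^sup>2)"
proof -
  have "(\<lambda>x. (\<Sum>i\<in>B. f i x)\<^sup>2) = (\<lambda>x. \<Sum>i\<in>B. \<Sum>j\<in>B. f i x * f j x)"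
    by (simp add: power2_eq_square sum_product)
  moreover have "integrable M (\<lambda>x. \<Sum>i\<in>B. \<Sum>j\<in>B. f i x * f j x)"
    using assms by (intro Bochner_Integration.integrable_sum integrable_mult_of_square_integrable) auto
  ultimately show ?thesis by simp
qed

lemma borel_measurable_PiM_sum:
  assumes "B \<subseteq> A"
  shows "(\<lambda>f. \<Sum>i\<in>B. f i) \<in> borel_measurable (PiM A (\<lambda>_. borel :: real measure))"
  using assms by (intro borel_measurable_sum measurable_component_singleton) auto

lemma integrable_mult_bounded:
  fixes f H :: "'a \<Rightarrow> real"
  assumes f: "integrable M f" and H: "H \<in> borel_measurable M" "\<And>x. x \<in> space M \<Longrightarrow> \<bar>H x\<bar> \<le> 1"
  shows "integrable M (\<lambda>x. H x * f x)"
proof (rule Bochner_Integration.integrable_bound[OF f])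
  show "(\<lambda>x. H x * f x) \<in> borel_measurable M"
    using H(1) borel_measurable_integrable[OF f] by measurable
  show "AE x in M. norm (H x * f x) \<le> norm (f x)"
    using H(2) by (intro AE_I2) (auto simp: abs_mult intro!: mult_left_le_one_le)
qed

lemma (in prob_space) indep_vars_orthogonal:
  fixes Z :: "'i \<Rightarrow> 'a \<Rightarrow> real"
  assumes indep: "indep_vars (\<lambda>_. borel) Z I"
    and int: "\<And>i. i \<in> I \<Longrightarrow> integrable M (Z i)"
    and mean: "\<And>i. i \<in> I \<Longrightarrow> expectation (Z i) = 0"
    and AB: "A \<subseteq> I" "B \<subseteq> I" "A \<inter> B = {}" "finite B"
    and g: "g \<in> borel_measurable (PiM A (\<lambda>_. borel))"
    and G: "integrable M G" "\<And>x. x \<in> space M \<Longrightarrow> G x = g (restrict (\<lambda>i. Z i x) A)"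
  shows "integrable M (\<lambda>x. G x * (\<Sum>j\<in>B. Z j x))"
    and "expectation (\<lambda>x. G x * (\<Sum>j\<in>B. Z j x)) = 0"
proof -
  have "indep_var borel (g \<circ> (\<lambda>x. restrict (\<lambda>i. Z i x) A))
      borel ((\<lambda>f. \<Sum>j\<in>B. f j) \<circ> (\<lambda>x. restrict (\<lambda>i. Z i x) B))"
    using AB by (intro indep_var_compose[OF indep_var_restrict[OF indep]] g borel_measurable_PiM_sum) auto
  then have ind: "indep_var borel (\<lambda>x. g (restrict (\<lambda>i. Z i x) A)) borel (\<lambda>x. \<Sum>j\<in>B. Z j x)"
    by (simp add: comp_def cong: sum.cong)
  have gint: "integrable M (\<lambda>x. g (restrict (\<lambda>i. Z i x) A))"
    using G by (simp cong: Bochner_Integration.integrable_cong)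
  have sint: "integrable M (\<lambda>x. \<Sum>j\<in>B. Z j x)"
    using AB int by (intro Bochner_Integration.integrable_sum) auto
  show "integrable M (\<lambda>x. G x * (\<Sum>j\<in>B. Z j x))"
    using indep_var_integrable[OF ind gint sint] G(2) by (simp cong: Bochner_Integration.integrable_cong)
  have "expectation (\<lambda>x. G x * (\<Sum>j\<in>B. Z j x))
      = expectation (\<lambda>x. g (restrict (\<lambda>i. Z i x) A)) * expectation (\<lambda>x. \<Sum>j\<in>B. Z j x)"
    using indep_var_lebesgue_integral[OF ind gint sint] G(2) by (simp cong: Bochner_Integration.integral_cong)
  also have "expectation (\<lambda>x. \<Sum>j\<in>B. Z j x) = 0"
    using AB int mean by (simp add: Bochner_Integration.integral_sum subset_iff)
  finally show "expectation (\<lambda>x. G x * (\<Sum>j\<in>B. Z j x)) = 0" by simp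
qed

lemma (in prob_space) expectation_square_sum_indep:
  fixes Z :: "'i \<Rightarrow> 'a \<Rightarrow> real"
  assumes indep: "indep_vars (\<lambda>_. borel) Z I"
    and sq: "\<And>i. i \<in> I \<Longrightarrow> integrable M (\<lambda>x. (Z i x)\<^sup>2)"
    and mean: "\<And>i. i \<in> I \<Longrightarrow> expectation (Z i) = 0"
    and B: "finite B" "B \<subseteq> I"
  shows "expectation (\<lambda>x. (\<Sum>i\<in>B. Z i x)\<^sup>2) = (\<Sum>i\<in>B. expectation (\<lambda>x. (Z i x)\<^sup>2))"
  using B
proof (induction B rule: finite_induct)
  case (insert j B)
  have rv[measurable]: "Z i \<in> borel_measurable M" if "i \<in> I" for i
    using indep that unfolding indep_vars_def by auto
  have int: "integrable M (Z i)" if "i \<in> I" for i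
    by (rule square_integrable_imp_integrable[OF rv[OF that] sq[OF that]])
  have sqB: "integrable M (\<lambda>x. (\<Sum>i\<in>B. Z i x)\<^sup>2)"
    using insert by (intro integrable_square_sum rv sq) auto
  note orth = indep_vars_orthogonal[OF indep int mean, of B "{j}" "\<lambda>f. \<Sum>i\<in>B. f i" "\<lambda>x. \<Sum>i\<in>B. Z i x"]
  have cross: "integrable M (\<lambda>x. (\<Sum>i\<in>B. Z i x) * Z j x)" "expectation (\<lambda>x. (\<Sum>i\<in>B. Z i x) * Z j x) = 0"
    using insert orth
    by (auto intro!: borel_measurable_PiM_sum Bochner_Integration.integrable_sum int sum.cong)
  have "expectation (\<lambda>x. (\<Sum>i\<in>insert j B. Z i x)\<^sup>2)
      = expectation (\<lambda>x. (\<Sum>i\<in>B. Z i x)\<^sup>2 + 2 * ((\<Sum>i\<in>B. Z i x) * Z j x) + (Z j x)\<^sup>2)"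
    using insert by (simp add: power2_eq_square algebra_simps)
  also have "\<dots> = expectation (\<lambda>x. (\<Sum>i\<in>B. Z i x)\<^sup>2) + expectation (\<lambda>x. (Z j x)\<^sup>2)"
    using sqB cross sq insert by simp
  finally show ?case using insert by simp
qed simp

definition first_passage :: "real \<Rightarrow> nat \<Rightarrow> nat \<Rightarrow> (nat \<Rightarrow> real) \<Rightarrow> bool" where
  "first_passage e m k f \<longleftrightarrow>
     e \<le> \<bar>\<Sum>i\<in>{m..<k}. f i\<bar> \<and> (\<forall>j\<in>{m..<k}. \<bar>\<Sum>i\<in>{m..<j}. f i\<bar> < e)"

lemma first_passage_restrict:
  "first_passage e m k (restrict f {m..<k}) \<longleftrightarrow> first_passage e m k f"
proof -
  have "(\<Sum>i\<in>{m..<j}. restrict f {m..<k} i) = (\<Sum>i\<in>{m..<j}. f i)" if "j \<le> k" for j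
    using that by (intro sum.cong) auto
  then show ?thesis unfolding first_passage_def by auto
qed

lemma measurable_first_passage [measurable]:
  "Measurable.pred (PiM {m..<k} (\<lambda>_. borel)) (first_passage e m k)"
proof -
  have [measurable]: "(\<lambda>f. \<Sum>i\<in>{m..<j}. f i :: real) \<in> borel_measurable (PiM {m..<k} (\<lambda>_. borel))"
    if "j \<le> k" for j
    using borel_measurable_PiM_sum[of "{m..<j}" "{m..<k}"] that by auto
  have [measurable]: "Measurable.pred (PiM {m..<k} (\<lambda>_. borel))
      (\<lambda>f. \<forall>j\<in>{m..<k}. \<bar>\<Sum>i\<in>{m..<j}. f i\<bar> < e)"
    by (intro pred_intros_finite) auto
  show ?thesis unfolding first_passage_def by measurable
qed

lemma first_passage_unique:
  assumes "first_passage e m j f" "first_passage e m k f" "m \<le> j" "m \<le> k"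
  shows "j = k"
  using assms unfolding first_passage_def by (metis atLeastLessThan_iff linorder_neqE_nat not_le)

lemma ex_first_passage:
  assumes "k \<in> {m..n}" "e \<le> \<bar>\<Sum>i\<in>{m..<k}. f i\<bar>"
  shows "\<exists>k\<in>{m..n}. first_passage e m k f"
proof -
  define k0 where "k0 = (LEAST k. k \<in> {m..n} \<and> e \<le> \<bar>\<Sum>i\<in>{m..<k}. f i\<bar>)"
  have k0: "k0 \<in> {m..n}" "e \<le> \<bar>\<Sum>i\<in>{m..<k0}. f i\<bar>"
    using LeastI[of "\<lambda>k. k \<in> {m..n} \<and> e \<le> \<bar>\<Sum>i\<in>{m..<k}. f i\<bar>"] assms unfolding k0_def by auto
  have "\<bar>\<Sum>i\<in>{m..<j}. f i\<bar> < e" if "j \<in> {m..<k0}" for j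
    using not_less_Least[of j "\<lambda>k. k \<in> {m..n} \<and> e \<le> \<bar>\<Sum>i\<in>{m..<k}. f i\<bar>"] that k0
    unfolding k0_def by auto
  then show ?thesis using k0 unfolding first_passage_def by blast
qed

lemma first_passage_disjoint:
  "disjoint_family_on (\<lambda>k. {x \<in> S. first_passage e m k (\<lambda>i. Z i x)}) {m..n}"
  unfolding disjoint_family_on_def
proof (intro ballI impI)
  fix j k assume "j \<in> {m..n}" "k \<in> {m..n}" "j \<noteq> k"
  then show "{x \<in> S. first_passage e m j (\<lambda>i. Z i x)} \<inter> {x \<in> S. first_passage e m k (\<lambda>i. Z i x)} = {}"
    using first_passage_unique[of e m j _ k] by auto
qed

lemma first_passage_Union:
  "{x \<in> S. \<exists>k\<in>{m..n}. e \<le> \<bar>\<Sum>i\<in>{m..<k}. Z i x\<bar>}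
    = (\<Union>k\<in>{m..n}. {x \<in> S. first_passage e m k (\<lambda>i. Z i x)})"
proof (intro equalityI subsetI)
  fix x assume "x \<in> {x \<in> S. \<exists>k\<in>{m..n}. e \<le> \<bar>\<Sum>i\<in>{m..<k}. Z i x\<bar>}"
  then obtain k where "x \<in> S" "k \<in> {m..n}" "e \<le> \<bar>\<Sum>i\<in>{m..<k}. Z i x\<bar>" by auto
  then show "x \<in> (\<Union>k\<in>{m..n}. {x \<in> S. first_passage e m k (\<lambda>i. Z i x)})"
    using ex_first_passage[of k m n e "\<lambda>i. Z i x"] by auto
qed (auto simp: first_passage_def)

text \<open>The submartingale property of the squared partial sums, tested against a bounded
  function of the earlier summands.\<close>

lemma (in prob_space) expectation_weighted_square_partial_sum_mono:
  fixes Z :: "nat \<Rightarrow> 'a \<Rightarrow> real"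
  assumes indep: "indep_vars (\<lambda>_. borel) Z {m..<n}"
    and sq: "\<And>i. i \<in> {m..<n} \<Longrightarrow> integrable M (\<lambda>x. (Z i x)\<^sup>2)"
    and mean: "\<And>i. i \<in> {m..<n} \<Longrightarrow> expectation (Z i) = 0"
    and k: "m \<le> k" "k \<le> n"
    and h: "h \<in> borel_measurable (PiM {m..<k} (\<lambda>_. borel))" "\<And>f. 0 \<le> h f" "\<And>f. h f \<le> 1"
  defines "H \<equiv> \<lambda>x. h (restrict (\<lambda>i. Z i x) {m..<k})"
  shows "expectation (\<lambda>x. H x * (\<Sum>i\<in>{m..<k}. Z i x)\<^sup>2)
      \<le> expectation (\<lambda>x. H x * (\<Sum>i\<in>{m..<n}. Z i x)\<^sup>2)"
proof -
  have rv[measurable]: "Z i \<in> borel_measurable M" if "i \<in> {m..<n}" for i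
    using indep that unfolding indep_vars_def by auto
  have H_measurable [measurable]: "H \<in> borel_measurable M"
    unfolding H_def using k by (intro measurable_compose[OF measurable_restrict h(1)]) auto
  define S where "S = (\<lambda>x. \<Sum>i\<in>{m..<k}. Z i x)"
  define R where "R = (\<lambda>x. \<Sum>i\<in>{k..<n}. Z i x)"
  define T where "T = (\<lambda>x. \<Sum>i\<in>{m..<n}. Z i x)"
  have T: "T x = S x + R x" for x
    unfolding S_def R_def T_def using k by (simp add: sum.atLeastLessThan_concat)
  have bounded: "integrable M (\<lambda>x. H x * f x)" if "integrable M f" for f
    using h(2,3) by (intro integrable_mult_bounded that H_measurable) (auto simp: H_def)
  have S2: "integrable M (\<lambda>x. (S x)\<^sup>2)" and T2: "integrable M (\<lambda>x. (T x)\<^sup>2)"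
    unfolding S_def T_def using k by (auto intro!: integrable_square_sum rv sq)
  have Zint: "integrable M (Z i)" if "i \<in> {m..<n}" for i
    by (rule square_integrable_imp_integrable[OF rv[OF that] sq[OF that]])
  have Sint: "integrable M S"
    unfolding S_def using k by (intro Bochner_Integration.integrable_sum Zint) auto
  have g: "(\<lambda>f. h f * (\<Sum>i\<in>{m..<k}. f i)) \<in> borel_measurable (PiM {m..<k} (\<lambda>_. borel))"
    by (intro borel_measurable_times h(1) borel_measurable_PiM_sum) simp
  have Geq: "H x * S x = h (restrict (\<lambda>i. Z i x) {m..<k}) * (\<Sum>i\<in>{m..<k}. restrict (\<lambda>i. Z i x) {m..<k} i)"
    for x by (simp add: H_def S_def)
  have sub: "{m..<k} \<subseteq> {m..<n}" "{k..<n} \<subseteq> {m..<n}" "{m..<k} \<inter> {k..<n} = {}"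
    using k by auto
  have cross: "integrable M (\<lambda>x. H x * S x * R x)" "expectation (\<lambda>x. H x * S x * R x) = 0"
    using indep_vars_orthogonal[OF indep Zint mean sub finite_atLeastLessThan g bounded[OF Sint] Geq]
    unfolding R_def by auto
  have "expectation (\<lambda>x. H x * (S x)\<^sup>2)
      = expectation (\<lambda>x. H x * (S x)\<^sup>2 + 2 * (H x * S x * R x))"
    using bounded[OF S2] cross by simp
  also have "\<dots> \<le> expectation (\<lambda>x. H x * (T x)\<^sup>2)"
  proof (rule integral_mono)
    show "integrable M (\<lambda>x. H x * (S x)\<^sup>2 + 2 * (H x * S x * R x))"
      using bounded[OF S2] cross(1) by simp
    show "integrable M (\<lambda>x. H x * (T x)\<^sup>2)"
      by (rule bounded[OF T2])
    have "0 \<le> H x * (R x)\<^sup>2" for x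
      using h(2) unfolding H_def by simp
    then show "H x * (S x)\<^sup>2 + 2 * (H x * S x * R x) \<le> H x * (T x)\<^sup>2" for x
      unfolding T by (simp add: power2_eq_square algebra_simps)
  qed
  finally show ?thesis unfolding S_def T_def .
qed

lemma (in prob_space) first_passage_bound:
  fixes Z :: "nat \<Rightarrow> 'a \<Rightarrow> real"
  assumes indep: "indep_vars (\<lambda>_. borel) Z {m..<n}"
    and sq: "\<And>i. i \<in> {m..<n} \<Longrightarrow> integrable M (\<lambda>x. (Z i x)\<^sup>2)"
    and mean: "\<And>i. i \<in> {m..<n} \<Longrightarrow> expectation (Z i) = 0"
    and e: "e > 0" and k: "k \<in> {m..n}"
  defines "A \<equiv> {x \<in> space M. first_passage e m k (\<lambda>i. Z i x)}"
  shows "A \<in> sets M"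
    and "e\<^sup>2 * prob A \<le> expectation (\<lambda>x. indicator A x * (\<Sum>i\<in>{m..<n}. Z i x)\<^sup>2)"
proof -
  have rv[measurable]: "Z i \<in> borel_measurable M" if "i \<in> {m..<n}" for i
    using indep that unfolding indep_vars_def by auto
  define S where "S = (\<lambda>k x. \<Sum>i\<in>{m..<k}. Z i x)"
  have A_eq: "A = {x \<in> space M. first_passage e m k (restrict (\<lambda>i. Z i x) {m..<k})}"
    unfolding A_def first_passage_restrict ..
  show A: "A \<in> sets M"
    unfolding A_eq by measurable (use k in auto)
  have "e\<^sup>2 * prob A = expectation (\<lambda>x. e\<^sup>2 * indicator A x)"
    using A by simp
  also have "\<dots> \<le> expectation (\<lambda>x. indicator A x * (S k x)\<^sup>2)"
  proof (rule integral_mono)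
    show "integrable M (\<lambda>x. e\<^sup>2 * indicator A x)"
      using A by (auto intro!: integrable_real_indicator simp: less_top[symmetric])
    show "integrable M (\<lambda>x. indicator A x * (S k x)\<^sup>2)"
      unfolding S_def using A k
      by (intro integrable_mult_bounded integrable_square_sum borel_measurable_indicator rv sq) auto
    have "e\<^sup>2 \<le> (S k x)\<^sup>2" if "x \<in> A" for x
      using that e by (simp add: A_def S_def first_passage_def abs_le_square_iff[symmetric])
    then show "e\<^sup>2 * indicator A x \<le> indicator A x * (S k x)\<^sup>2" for x
      by (simp add: indicator_def)
  qed
  also have "\<dots> \<le> expectation (\<lambda>x. indicator A x * (S n x)\<^sup>2)"
  proof -
    have ind: "indicator A x = of_bool (first_passage e m k (restrict (\<lambda>i. Z i x) {m..<k}))"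
      if "x \<in> space M" for x
      using that unfolding A_eq by simp
    have "expectation (\<lambda>x. indicator A x * (S j x)\<^sup>2)
        = expectation (\<lambda>x. of_bool (first_passage e m k (restrict (\<lambda>i. Z i x) {m..<k})) * (S j x)\<^sup>2)"
      for j by (rule Bochner_Integration.integral_cong) (simp_all only: ind)
    with expectation_weighted_square_partial_sum_mono[OF indep sq mean, of k
        "\<lambda>f. of_bool (first_passage e m k f)"] k
    show ?thesis unfolding S_def by simp
  qed
  finally show "e\<^sup>2 * prob A \<le> expectation (\<lambda>x. indicator A x * (\<Sum>i\<in>{m..<n}. Z i x)\<^sup>2)"
    unfolding S_def .
qed

theorem (in prob_space) kolmogorov_inequality:
  fixes Z :: "nat \<Rightarrow> 'a \<Rightarrow> real"
  assumes indep: "indep_vars (\<lambda>_. borel) Z {m..<n}"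
    and sq: "\<And>i. i \<in> {m..<n} \<Longrightarrow> integrable M (\<lambda>x. (Z i x)\<^sup>2)"
    and mean: "\<And>i. i \<in> {m..<n} \<Longrightarrow> expectation (Z i) = 0"
    and e: "e > 0"
  shows "prob {x \<in> space M. \<exists>k\<in>{m..n}. e \<le> \<bar>\<Sum>i\<in>{m..<k}. Z i x\<bar>}
      \<le> (\<Sum>i\<in>{m..<n}. expectation (\<lambda>x. (Z i x)\<^sup>2)) / e\<^sup>2"
proof -
  have rv[measurable]: "Z i \<in> borel_measurable M" if "i \<in> {m..<n}" for i
    using indep that unfolding indep_vars_def by auto
  define T where "T = (\<lambda>x. \<Sum>i\<in>{m..<n}. Z i x)"
  define A where "A = (\<lambda>k. {x \<in> space M. first_passage e m k (\<lambda>i. Z i x)})"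
  have passage: "A k \<in> sets M" "e\<^sup>2 * prob (A k) \<le> expectation (\<lambda>x. indicator (A k) x * (T x)\<^sup>2)"
    if "k \<in> {m..n}" for k
    using first_passage_bound[OF indep sq mean e that] unfolding A_def T_def by auto
  have T2: "integrable M (\<lambda>x. (T x)\<^sup>2)"
    unfolding T_def by (intro integrable_square_sum rv sq) auto
  note disj = first_passage_disjoint[of "space M" e m Z n, folded A_def]
  note union = first_passage_Union[of "space M" m n e Z, folded A_def]
  have "e\<^sup>2 * prob (\<Union>k\<in>{m..n}. A k) = (\<Sum>k\<in>{m..n}. e\<^sup>2 * prob (A k))"
    using passage(1) disj by (subst measure_finite_Union) (auto simp: sum_distrib_left)
  also have "\<dots> \<le> (\<Sum>k\<in>{m..n}. expectation (\<lambda>x. indicator (A k) x * (T x)\<^sup>2))"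
    by (intro sum_mono passage(2))
  also have "\<dots> = expectation (\<lambda>x. (\<Sum>k\<in>{m..n}. indicator (A k) x) * (T x)\<^sup>2)"
    unfolding sum_distrib_right using passage(1) T2
    by (intro Bochner_Integration.integral_sum[symmetric] integrable_mult_bounded borel_measurable_indicator) auto
  also have "\<dots> = expectation (\<lambda>x. indicator (\<Union>k\<in>{m..n}. A k) x * (T x)\<^sup>2)"
    by (simp only: indicator_UN_disjoint[OF finite_atLeastAtMost disj])
  also have "\<dots> \<le> expectation (\<lambda>x. (T x)\<^sup>2)"
  proof (rule integral_mono)
    show "integrable M (\<lambda>x. indicator (\<Union>k\<in>{m..n}. A k) x * (T x)\<^sup>2)"
      using passage(1) T2 by (intro integrable_mult_bounded borel_measurable_indicator sets.finite_UN) auto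
    show "indicator (\<Union>k\<in>{m..n}. A k) x * (T x)\<^sup>2 \<le> (T x)\<^sup>2" for x
      by (simp add: indicator_def)
  qed (fact T2)
  also have "\<dots> = (\<Sum>i\<in>{m..<n}. expectation (\<lambda>x. (Z i x)\<^sup>2))"
    unfolding T_def by (rule expectation_square_sum_indep[OF indep sq mean]) auto
  finally show ?thesis
    unfolding union[symmetric] using e by (simp add: field_simps)
qed

lemma summable_if_Cauchy_from_start:
  fixes f :: "nat \<Rightarrow> real"
  assumes "\<And>j::nat. \<exists>m. \<forall>k\<ge>m. \<bar>\<Sum>i\<in>{m..<k}. f i\<bar> < 1 / Suc j"
  shows "summable f"
  unfolding summable_Cauchy
proof (intro allI impI)
  fix e :: real assume "e > 0"
  obtain j :: nat where "2 / e < j"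
    using reals_Archimedean2 by blast
  then have j: "2 / Suc j < e"
    using \<open>e > 0\<close> by (simp add: field_simps)
  obtain m where m: "\<And>k. k \<ge> m \<Longrightarrow> \<bar>\<Sum>i\<in>{m..<k}. f i\<bar> < 1 / Suc j"
    using assms by blast
  have "norm (\<Sum>i\<in>{p..<k}. f i) < e" if "m \<le> p" for p k
  proof (cases "p \<le> k")
    case True
    then have "(\<Sum>i\<in>{p..<k}. f i) = (\<Sum>i\<in>{m..<k}. f i) - (\<Sum>i\<in>{m..<p}. f i)"
      using sum.atLeastLessThan_concat[OF that True, of f] by linarith
    then have "\<bar>\<Sum>i\<in>{p..<k}. f i\<bar> \<le> \<bar>\<Sum>i\<in>{m..<k}. f i\<bar> + \<bar>\<Sum>i\<in>{m..<p}. f i\<bar>"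
      by (simp only: abs_triangle_ineq4)
    also have "\<dots> < 1 / Suc j + 1 / Suc j"
      using m[of k] m[of p] that True by (intro add_strict_mono) auto
    finally show ?thesis using j by simp
  qed (use \<open>e > 0\<close> in simp)
  then show "\<exists>m. \<forall>p\<ge>m. \<forall>k. norm (\<Sum>i\<in>{p..<k}. f i) < e" by blast
qed

lemma (in prob_space) prob_partial_sums_exceed:
  fixes Z :: "nat \<Rightarrow> 'a \<Rightarrow> real"
  assumes indep: "indep_vars (\<lambda>_. borel) Z UNIV"
    and sq: "\<And>i. integrable M (\<lambda>x. (Z i x)\<^sup>2)"
    and mean: "\<And>i. expectation (Z i) = 0"
    and e: "e > 0" and d: "\<And>n. (\<Sum>i\<in>{m..<n}. expectation (\<lambda>x. (Z i x)\<^sup>2)) \<le> d"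
  shows "prob {x \<in> space M. \<exists>k\<ge>m. e \<le> \<bar>\<Sum>i\<in>{m..<k}. Z i x\<bar>} \<le> d / e\<^sup>2"
proof -
  have [measurable]: "Z i \<in> borel_measurable M" for i
    using indep unfolding indep_vars_def by auto
  define F where "F n = {x \<in> space M. \<exists>k\<in>{m..n}. e \<le> \<bar>\<Sum>i\<in>{m..<k}. Z i x\<bar>}" for n
  have "prob (F n) \<le> d / e\<^sup>2" for n
  proof -
    have "prob (F n) \<le> (\<Sum>i\<in>{m..<n}. expectation (\<lambda>x. (Z i x)\<^sup>2)) / e\<^sup>2"
      unfolding F_def using indep_vars_subset[OF indep]
      by (intro kolmogorov_inequality sq mean e) auto
    also have "\<dots> \<le> d / e\<^sup>2"
      by (intro divide_right_mono d) simp
    finally show ?thesis .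
  qed
  moreover have "(\<lambda>n. prob (F n)) \<longlonglongrightarrow> prob (\<Union>n. F n)"
    by (rule finite_Lim_measure_incseq) (auto simp: F_def incseq_def)
  ultimately have "prob (\<Union>n. F n) \<le> d / e\<^sup>2"
    by (intro LIMSEQ_le_const2) auto
  also have "(\<Union>n. F n) = {x \<in> space M. \<exists>k\<ge>m. e \<le> \<bar>\<Sum>i\<in>{m..<k}. Z i x\<bar>}"
    unfolding F_def by (force simp: atLeastAtMost_iff)
  finally show ?thesis .
qed

lemma (in prob_space) partial_sums_oscillation_null:
  fixes Z :: "nat \<Rightarrow> 'a \<Rightarrow> real"
  assumes indep: "indep_vars (\<lambda>_. borel) Z UNIV"
    and sq: "\<And>i. integrable M (\<lambda>x. (Z i x)\<^sup>2)"
    and mean: "\<And>i. expectation (Z i) = 0"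
    and summ: "summable (\<lambda>i. expectation (\<lambda>x. (Z i x)\<^sup>2))"
    and e: "e > 0"
  shows "{x \<in> space M. \<forall>m. \<exists>k\<ge>m. e \<le> \<bar>\<Sum>i\<in>{m..<k}. Z i x\<bar>} \<in> null_sets M"
proof -
  have [measurable]: "Z i \<in> borel_measurable M" for i
    using indep unfolding indep_vars_def by auto
  let ?N = "{x \<in> space M. \<forall>m. \<exists>k\<ge>m. e \<le> \<bar>\<Sum>i\<in>{m..<k}. Z i x\<bar>}"
  have "prob ?N \<le> d" if d: "d > 0" for d
  proof -
    obtain m where m: "\<And>n. norm (\<Sum>i\<in>{m..<n}. expectation (\<lambda>x. (Z i x)\<^sup>2)) < d * e\<^sup>2"
      using summ d e unfolding summable_Cauchy by (metis mult_pos_pos zero_less_power order_refl)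
    have "(\<Sum>i\<in>{m..<n}. expectation (\<lambda>x. (Z i x)\<^sup>2)) \<le> d * e\<^sup>2" for n
      using m[of n] by (auto simp: abs_less_iff)
    moreover have "prob ?N \<le> prob {x \<in> space M. \<exists>k\<ge>m. e \<le> \<bar>\<Sum>i\<in>{m..<k}. Z i x\<bar>}"
      by (intro finite_measure_mono) auto
    ultimately have "prob ?N \<le> d * e\<^sup>2 / e\<^sup>2"
      using prob_partial_sums_exceed[OF indep sq mean e] by (meson order_trans)
    then show ?thesis using e by simp
  qed
  then have "prob ?N = 0"
    by (meson measure_nonneg antisym dense not_le)
  then show ?thesis by (auto simp: emeasure_eq_measure)
qed

theorem (in prob_space) kolmogorov_convergence_criterion:
  fixes Z :: "nat \<Rightarrow> 'a \<Rightarrow> real"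
  assumes indep: "indep_vars (\<lambda>_. borel) Z UNIV"
    and sq: "\<And>i. integrable M (\<lambda>x. (Z i x)\<^sup>2)"
    and mean: "\<And>i. expectation (Z i) = 0"
    and summ: "summable (\<lambda>i. expectation (\<lambda>x. (Z i x)\<^sup>2))"
  shows "AE x in M. summable (\<lambda>i. Z i x)"
proof -
  have "AE x in M. \<forall>j::nat. \<exists>m. \<forall>k\<ge>m. \<bar>\<Sum>i\<in>{m..<k}. Z i x\<bar> < 1 / Suc j"
    unfolding AE_all_countable
  proof
    fix j :: nat
    show "AE x in M. \<exists>m. \<forall>k\<ge>m. \<bar>\<Sum>i\<in>{m..<k}. Z i x\<bar> < 1 / Suc j"
      using partial_sums_oscillation_null[OF indep sq mean summ, of "1 / Suc j"]
      by (rule AE_I') (auto simp: not_less)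
  qed
  then show ?thesis
    by (rule AE_mp) (auto intro!: AE_I2 summable_if_Cauchy_from_start)
qed

section \<open>Characteristic functions\<close>

lemma (in prob_space) char_distr:
  assumes [measurable]: "f \<in> borel_measurable M"
  shows "char (distr M borel f) t = (CLINT x|M. iexp (t * f x))"
  unfolding char_def by (simp add: integral_distr)

lemma (in prob_space) char_distr_weighted_sum:
  fixes Y :: "'i \<Rightarrow> 'a \<Rightarrow> real"
  assumes indep: "indep_vars (\<lambda>_. borel) Y I" and S: "S \<subseteq> I"
    and ident: "\<And>s. s \<in> S \<Longrightarrow> distr M borel (Y s) = \<mu>"
  shows "char (distr M borel (\<lambda>x. \<Sum>s\<in>S. a s * Y s x)) t = (\<Prod>s\<in>S. char \<mu> (t * a s))"
proof -
  have rv[measurable]: "Y s \<in> borel_measurable M" if "s \<in> S" for s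
    using indep that S unfolding indep_vars_def by auto
  have "indep_vars (\<lambda>_. borel) (\<lambda>s x. a s * Y s x) S"
    by (rule indep_vars_compose2[where X=Y, OF indep_vars_subset[OF indep S]]) auto
  then have "char (distr M borel (\<lambda>x. \<Sum>s\<in>S. a s * Y s x)) t
      = (\<Prod>s\<in>S. char (distr M borel (\<lambda>x. a s * Y s x)) t)"
    by (rule char_distr_sum)
  also have "\<dots> = (\<Prod>s\<in>S. char (distr M borel (Y s)) (t * a s))"
    by (intro prod.cong refl) (simp add: char_distr mult.assoc)
  finally show ?thesis
    using ident by simp
qed

lemma (in prob_space) char_distr_tendsto:
  assumes [measurable]: "\<And>K. f K \<in> borel_measurable M" "g \<in> borel_measurable M"
    and lim: "AE x in M. (\<lambda>K. f K x) \<longlonglongrightarrow> g x"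
  shows "(\<lambda>K. char (distr M borel (f K)) t) \<longlonglongrightarrow> char (distr M borel g) t"
  unfolding char_distr[OF assms(1)] char_distr[OF assms(2)]
proof (rule integral_dominated_convergence[where w="\<lambda>_. 1"])
  show "AE x in M. (\<lambda>K. iexp (t * f K x)) \<longlonglongrightarrow> iexp (t * g x)"
    using lim by eventually_elim (intro tendsto_intros)
  show "AE x in M. norm (iexp (t * f K x)) \<le> 1" for K
    by (intro AE_I2) (simp del: of_real_mult)
qed measurable

lemma real_distribution_convolution:
  assumes "real_distribution A" "real_distribution B"
  shows "real_distribution (A \<star> B)"
proof -
  interpret A: real_distribution A by fact
  interpret B: real_distribution B by fact
  interpret pair_prob_space A B ..
  have "prob_space (A \<star> B)"
    unfolding convolution_def by (rule prob_space_distr) measurable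
  then show ?thesis
    unfolding real_distribution_def real_distribution_axioms_def by simp
qed

lemma char_convolution:
  assumes "real_distribution A" "real_distribution B"
  shows "char (A \<star> B) t = char A t * char B t"
proof -
  interpret A: real_distribution A by fact
  interpret B: real_distribution B by fact
  interpret pair_prob_space A B ..
  have int: "integrable (A \<Otimes>\<^sub>M B) (\<lambda>(x, y). iexp (t * x) * iexp (t * y))"
    by (rule integrable_const_bound[where B=1]) (auto simp: norm_mult simp del: of_real_mult)
  have "char (A \<star> B) t = (CLINT z|A \<Otimes>\<^sub>M B. iexp (t * (fst z + snd z)))"
    unfolding convolution_def char_def by (simp add: integral_distr case_prod_beta)
  also have "\<dots> = (CLINT z|A \<Otimes>\<^sub>M B. (\<lambda>(x, y). iexp (t * x) * iexp (t * y)) z)"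
    by (intro Bochner_Integration.integral_cong) (auto simp: distrib_left exp_add)
  also have "\<dots> = (CLINT x|A. (CLINT y|B. iexp (t * x) * iexp (t * y)))"
    using integral_fst'[OF int] by simp
  also have "\<dots> = char A t * char B t"
    unfolding char_def by simp
  finally show ?thesis .
qed

lemma real_distribution_scaled_std_normal:
  "real_distribution (distr std_normal_distribution borel (\<lambda>z. \<rho> * z))"
proof -
  interpret real_distribution std_normal_distribution by (rule real_dist_normal_dist)
  show ?thesis by (rule real_distribution_distr) simp
qed

lemma char_scaled_std_normal:
  "char (distr std_normal_distribution borel (\<lambda>z. \<rho> * z)) t = exp (- (\<rho> * t)\<^sup>2 / 2)"
proof -
  interpret real_distribution std_normal_distribution by (rule real_dist_normal_dist)
  have "char (distr std_normal_distribution borel (\<lambda>z. \<rho> * z)) t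
      = (CLINT x|std_normal_distribution. iexp (t * (\<rho> * x)))"
    by (rule char_distr) simp
  also have "\<dots> = char std_normal_distribution (t * \<rho>)"
    by (simp add: char_def mult.assoc)
  finally show ?thesis
    by (simp add: char_std_normal_distribution mult.commute)
qed

lemma abs_exp_minus_le:
  fixes a :: real
  assumes "0 \<le> a"
  shows "\<bar>exp (- a) - (1 - a)\<bar> \<le> a\<^sup>2 / 2"
proof (cases "a = 0")
  case False
  then have "- a < 0" using assms by simp
  then obtain s where s: "- a < s" "s < 0"
    and eq: "exp (- a) = (\<Sum>m<2. exp 0 / fact m * (- a) ^ m) + exp s / fact 2 * (- a) ^ 2"
    using Maclaurin_minus[of "- a" 2 "\<lambda>_. exp"] by (auto intro: DERIV_exp)
  have remainder: "exp (- a) - (1 - a) = exp s / 2 * a\<^sup>2"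
    using eq by (simp add: eval_nat_numeral)
  have "exp s / 2 * a\<^sup>2 \<le> a\<^sup>2 / 2"
    using s by (simp add: divide_right_mono mult_left_le_one_le)
  then show ?thesis
    unfolding remainder by simp
qed simp

context prob_space
begin

text \<open>The error term of the second-order Taylor bound \<open>char_approx3'\<close> for
  characteristic functions.\<close>

definition truncated_third_moment :: "('a \<Rightarrow> real) \<Rightarrow> real \<Rightarrow> real" where
  "truncated_third_moment X d = expectation (\<lambda>x. min (6 * (X x)\<^sup>2) (d * \<bar>X x\<bar> ^ 3))"

lemma truncated_third_moment_nonneg: "0 \<le> d \<Longrightarrow> 0 \<le> truncated_third_moment X d"
  unfolding truncated_third_moment_def by (intro integral_nonneg_AE AE_I2) auto

lemma truncated_third_moment_mono:
  fixes X :: "'a \<Rightarrow> real"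
  assumes [measurable]: "X \<in> borel_measurable M" and sq: "integrable M (\<lambda>x. (X x)\<^sup>2)"
    and d: "0 \<le> d" "d \<le> d'"
  shows "truncated_third_moment X d \<le> truncated_third_moment X d'"
proof -
  have int: "integrable M (\<lambda>x. min (6 * (X x)\<^sup>2) (d * \<bar>X x\<bar> ^ 3))" if "0 \<le> d" for d
  proof (rule Bochner_Integration.integrable_bound[where f="\<lambda>x. 6 * (X x)\<^sup>2"])
    show "AE x in M. norm (min (6 * (X x)\<^sup>2) (d * \<bar>X x\<bar> ^ 3)) \<le> norm (6 * (X x)\<^sup>2)"
      using that by (intro AE_I2) (auto simp: abs_le_iff min_def)
    show "integrable M (\<lambda>x. 6 * (X x)\<^sup>2)"
      using sq by simp
  qed measurable
  show ?thesis
    unfolding truncated_third_moment_def using d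
    by (intro integral_mono int min.mono mult_right_mono) auto
qed

lemma truncated_third_moment_tendsto_0:
  fixes X :: "'a \<Rightarrow> real"
  assumes [measurable]: "X \<in> borel_measurable M" and sq: "integrable M (\<lambda>x. (X x)\<^sup>2)"
    and d: "d \<longlonglongrightarrow> 0" "\<And>n. 0 \<le> d n"
  shows "(\<lambda>n. truncated_third_moment X (d n)) \<longlonglongrightarrow> 0"
proof -
  have "(\<lambda>n. expectation (\<lambda>x. min (6 * (X x)\<^sup>2) (d n * \<bar>X x\<bar> ^ 3))) \<longlonglongrightarrow> expectation (\<lambda>x. 0)"
  proof (rule integral_dominated_convergence[where w="\<lambda>x. 6 * (X x)\<^sup>2"])
    show "AE x in M. (\<lambda>n. min (6 * (X x)\<^sup>2) (d n * \<bar>X x\<bar> ^ 3)) \<longlonglongrightarrow> 0"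
    proof (rule AE_I2)
      fix x
      have "(\<lambda>n. min (6 * (X x)\<^sup>2) (d n * \<bar>X x\<bar> ^ 3)) \<longlonglongrightarrow> min (6 * (X x)\<^sup>2) (0 * \<bar>X x\<bar> ^ 3)"
        by (intro tendsto_intros d)
      moreover have "min (6 * (X x)\<^sup>2) (0 * \<bar>X x\<bar> ^ 3) = 0"
        by (simp add: min_def)
      ultimately show "(\<lambda>n. min (6 * (X x)\<^sup>2) (d n * \<bar>X x\<bar> ^ 3)) \<longlonglongrightarrow> 0"
        by simp
    qed
    show "AE x in M. norm (min (6 * (X x)\<^sup>2) (d n * \<bar>X x\<bar> ^ 3)) \<le> 6 * (X x)\<^sup>2" for n
      using d(2)[of n] by (intro AE_I2) (auto simp: abs_le_iff min_def)
    show "integrable M (\<lambda>x. 6 * (X x)\<^sup>2)"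
      using sq by simp
  qed measurable
  then show ?thesis
    unfolding truncated_third_moment_def by simp
qed

lemma char_approx_std_normal:
  fixes X :: "'a \<Rightarrow> real"
  assumes [measurable]: "X \<in> borel_measurable M" and sq: "integrable M (\<lambda>x. (X x)\<^sup>2)"
    and mean: "expectation X = 0" and var: "expectation (\<lambda>x. (X x)\<^sup>2) = 1"
  shows "cmod (char (distr M borel X) u - exp (- u\<^sup>2 / 2))
      \<le> u\<^sup>2 / 6 * truncated_third_moment X \<bar>u\<bar> + u ^ 4 / 8"
proof -
  have "cmod (char (distr M borel X) u - (1 - u\<^sup>2 * 1 / 2)) \<le> u\<^sup>2 / 6 * truncated_third_moment X \<bar>u\<bar>"
    unfolding truncated_third_moment_def
    using sq mean var square_integrable_imp_integrable[OF _ sq]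
    by (intro char_approx3') auto
  moreover have "cmod (complex_of_real (1 - u\<^sup>2 / 2) - exp (- u\<^sup>2 / 2)) \<le> u ^ 4 / 8"
  proof -
    have "cmod (complex_of_real (1 - u\<^sup>2 / 2) - exp (- u\<^sup>2 / 2)) = \<bar>exp (- (u\<^sup>2 / 2)) - (1 - u\<^sup>2 / 2)\<bar>"
      by (simp flip: of_real_diff add: abs_minus_commute)
    also have "\<dots> \<le> (u\<^sup>2 / 2)\<^sup>2 / 2"
      by (rule abs_exp_minus_le) simp
    finally show ?thesis
      by (simp add: power2_eq_square eval_nat_numeral)
  qed
  ultimately show ?thesis
    using norm_triangle_ineq[of "char (distr M borel X) u - (1 - u\<^sup>2 / 2)" "(1 - u\<^sup>2 / 2) - exp (- u\<^sup>2 / 2)"]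
    by simp
qed

lemma char_approx_std_normal_scaled:
  fixes X :: "'a \<Rightarrow> real"
  assumes [measurable]: "X \<in> borel_measurable M" and sq: "integrable M (\<lambda>x. (X x)\<^sup>2)"
    and mean: "expectation X = 0" and var: "expectation (\<lambda>x. (X x)\<^sup>2) = 1"
    and b: "b\<^sup>2 \<le> q"
  shows "cmod (char (distr M borel X) (t * b) - exp (- (t * b)\<^sup>2 / 2))
      \<le> b\<^sup>2 * (t\<^sup>2 / 6 * truncated_third_moment X (\<bar>t\<bar> * sqrt q) + t ^ 4 * q / 8)"
proof -
  have "\<bar>t * b\<bar> \<le> \<bar>t\<bar> * sqrt q"
    using b by (simp add: abs_mult mult_left_mono real_le_rsqrt)
  then have moment: "truncated_third_moment X \<bar>t * b\<bar> \<le> truncated_third_moment X (\<bar>t\<bar> * sqrt q)"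
    by (intro truncated_third_moment_mono sq) auto
  have "b ^ 4 = b\<^sup>2 * b\<^sup>2"
    by simp
  also have "\<dots> \<le> b\<^sup>2 * q"
    using b by (intro mult_left_mono) auto
  finally have "t ^ 4 * b ^ 4 \<le> t ^ 4 * (b\<^sup>2 * q)"
    by (intro mult_left_mono) auto
  moreover have "t\<^sup>2 * b\<^sup>2 * truncated_third_moment X \<bar>t * b\<bar>
      \<le> t\<^sup>2 * b\<^sup>2 * truncated_third_moment X (\<bar>t\<bar> * sqrt q)"
    by (intro mult_left_mono moment) auto
  ultimately have "(t * b)\<^sup>2 / 6 * truncated_third_moment X \<bar>t * b\<bar> + (t * b) ^ 4 / 8
      \<le> b\<^sup>2 * (t\<^sup>2 / 6 * truncated_third_moment X (\<bar>t\<bar> * sqrt q) + t ^ 4 * q / 8)"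
    by (simp add: power_mult_distrib algebra_simps)
  then show ?thesis
    using char_approx_std_normal[OF _ sq mean var, of "t * b"] by simp
qed

lemma prod_char_approx_normal:
  fixes X :: "'a \<Rightarrow> real" and b :: "'i \<Rightarrow> real"
  assumes [measurable]: "X \<in> borel_measurable M" and sq: "integrable M (\<lambda>x. (X x)\<^sup>2)"
    and mean: "expectation X = 0" and var: "expectation (\<lambda>x. (X x)\<^sup>2) = 1"
    and S: "finite S" and b: "\<And>s. s \<in> S \<Longrightarrow> (b s)\<^sup>2 \<le> q" and q: "0 \<le> q"
    and L: "(\<Sum>s\<in>S. (b s)\<^sup>2) \<le> L"
  shows "cmod ((\<Prod>s\<in>S. char (distr M borel X) (t * b s)) - exp (- t\<^sup>2 * (\<Sum>s\<in>S. (b s)\<^sup>2) / 2))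
      \<le> L * (t\<^sup>2 / 6 * truncated_third_moment X (\<bar>t\<bar> * sqrt q) + t ^ 4 * q / 8)"
proof -
  interpret D: real_distribution "distr M borel X" by simp
  define C where "C = t\<^sup>2 / 6 * truncated_third_moment X (\<bar>t\<bar> * sqrt q) + t ^ 4 * q / 8"
  have "0 \<le> C"
    unfolding C_def using truncated_third_moment_nonneg[of "\<bar>t\<bar> * sqrt q" X] q by simp
  have "complex_of_real (exp (- t\<^sup>2 * (\<Sum>s\<in>S. (b s)\<^sup>2) / 2)) = (\<Prod>s\<in>S. exp (- (t * b s)\<^sup>2 / 2))"
    using S by (simp add: exp_sum sum_distrib_left sum_divide_distrib power_mult_distrib flip: exp_of_real)
  then have "cmod ((\<Prod>s\<in>S. char (distr M borel X) (t * b s)) - exp (- t\<^sup>2 * (\<Sum>s\<in>S. (b s)\<^sup>2) / 2))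
      \<le> (\<Sum>s\<in>S. cmod (char (distr M borel X) (t * b s) - exp (- (t * b s)\<^sup>2 / 2)))"
    by (simp del: of_real_mult) (rule norm_prod_diff, auto simp: D.cmod_char_le_1)
  also have "\<dots> \<le> (\<Sum>s\<in>S. (b s)\<^sup>2 * C)"
    unfolding C_def using b by (intro sum_mono char_approx_std_normal_scaled sq mean var) auto
  also have "\<dots> \<le> L * C"
    using L \<open>0 \<le> C\<close> by (simp add: mult_right_mono flip: sum_distrib_right)
  finally show ?thesis unfolding C_def .
qed

end

section \<open>Weighted sums of i.i.d. variables along a triangular array\<close>

lemma tendsto_split_product:
  fixes H T :: "nat \<Rightarrow> nat \<Rightarrow> complex" and a :: "nat \<Rightarrow> complex"
  assumes H1: "\<And>n K. norm (H n K) \<le> 1" and G1: "norm G \<le> 1"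
    and head: "\<And>K. (\<lambda>n. H n K) \<longlonglongrightarrow> h K" and head_lim: "h \<longlonglongrightarrow> C"
    and tail: "\<And>e. e > 0 \<Longrightarrow> \<forall>\<^sub>F K in sequentially. \<forall>\<^sub>F n in sequentially. norm (T n K - G) < e"
    and split: "\<And>K. \<forall>\<^sub>F n in sequentially. a n = H n K * T n K"
  shows "a \<longlonglongrightarrow> C * G"
proof (rule LIMSEQ_I)
  fix e :: real assume "e > 0"
  then have e3: "e / 3 > 0" by simp
  have "\<forall>\<^sub>F K in sequentially. norm (h K - C) < e / 3
      \<and> (\<forall>\<^sub>F n in sequentially. norm (T n K - G) < e / 3)"
    using tendstoD[OF head_lim e3] tail[OF e3]
    by eventually_elim (simp add: dist_norm)
  then obtain K where K: "norm (h K - C) < e / 3" "\<forall>\<^sub>F n in sequentially. norm (T n K - G) < e / 3"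
    using eventually_happens'[OF sequentially_bot] by blast
  have "\<forall>\<^sub>F n in sequentially. norm (a n - C * G) < e"
    using K(2) split[of K] tendstoD[OF head[of K] e3]
  proof eventually_elim
    case (elim n)
    have "a n - C * G = H n K * (T n K - G) + (H n K - h K) * G + (h K - C) * G"
      using elim(2) by (simp add: algebra_simps)
    then have "norm (a n - C * G)
        \<le> norm (H n K * (T n K - G) + (H n K - h K) * G) + norm ((h K - C) * G)"
      by (simp only: norm_triangle_ineq)
    also have "\<dots> \<le> norm (H n K) * norm (T n K - G) + norm (H n K - h K) * norm G + norm (h K - C) * norm G"
      unfolding norm_mult[symmetric] by (intro add_mono norm_triangle_ineq order_refl)
    also have "\<dots> \<le> norm (T n K - G) + norm (H n K - h K) + norm (h K - C)"
      using H1[of n K] G1 by (intro add_mono mult_left_le_one_le mult_right_le_one_le) auto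
    also have "\<dots> < e"
      using elim K(1) by (simp add: dist_norm norm_minus_commute)
    finally show ?case .
  qed
  then show "\<exists>N. \<forall>n\<ge>N. norm (a n - C * G) < e"
    by (simp add: eventually_sequentially)
qed

lemma eventually_near_of_limsup_liminf:
  fixes V :: "nat \<Rightarrow> nat \<Rightarrow> real"
  assumes sup: "(\<lambda>K. limsup (\<lambda>n. ereal (V n K))) \<longlonglongrightarrow> ereal v"
    and inf: "(\<lambda>K. liminf (\<lambda>n. ereal (V n K))) \<longlonglongrightarrow> ereal v"
    and d: "d > 0"
  shows "\<forall>\<^sub>F K in sequentially. \<forall>\<^sub>F n in sequentially. \<bar>V n K - v\<bar> < d"
proof -
  have "\<forall>\<^sub>F K in sequentially. limsup (\<lambda>n. ereal (V n K)) < ereal (v + d)"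
    using order_tendstoD(2)[OF sup, of "ereal (v + d)"] d by simp
  moreover have "\<forall>\<^sub>F K in sequentially. ereal (v - d) < liminf (\<lambda>n. ereal (V n K))"
    using order_tendstoD(1)[OF inf, of "ereal (v - d)"] d by simp
  ultimately show ?thesis
  proof eventually_elim
    case (elim K)
    have "\<forall>\<^sub>F n in sequentially. ereal (V n K) < ereal (v + d)"
      using elim(1) by (rule Limsup_lessD)
    moreover have "\<forall>\<^sub>F n in sequentially. ereal (v - d) < ereal (V n K)"
      using elim(2) by (rule less_LiminfD)
    ultimately show ?case
      by eventually_elim auto
  qed
qed

lemma abs_le_if_abs_decreasing:
  fixes c :: "nat \<Rightarrow> real"
  assumes dec: "\<And>s. 1 \<le> s \<Longrightarrow> s < r \<Longrightarrow> \<bar>c (Suc s)\<bar> \<le> \<bar>c s\<bar>"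
    and "1 \<le> j" "j \<le> s" "s \<le> r"
  shows "\<bar>c s\<bar> \<le> \<bar>c j\<bar>"
  using \<open>j \<le> s\<close> \<open>s \<le> r\<close>
proof (induction s rule: dec_induct)
  case (step s)
  then have "\<bar>c (Suc s)\<bar> \<le> \<bar>c s\<bar>"
    using \<open>1 \<le> j\<close> by (intro dec) auto
  with step show ?case by simp
qed simp

lemma square_le_if_abs_decreasing:
  fixes c :: "nat \<Rightarrow> real"
  assumes dec: "\<And>s. 1 \<le> s \<Longrightarrow> s < r \<Longrightarrow> \<bar>c (Suc s)\<bar> \<le> \<bar>c s\<bar>"
    and sum: "(\<Sum>s=1..r. (c s)\<^sup>2) \<le> L"
    and K: "1 \<le> K" "K < s" "s \<le> r"
  shows "(c s)\<^sup>2 \<le> L / K"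
proof -
  have "real K * (c s)\<^sup>2 = (\<Sum>j=1..K. (c s)\<^sup>2)"
    by simp
  also have "\<dots> \<le> (\<Sum>j=1..K. (c j)\<^sup>2)"
  proof (rule sum_mono)
    fix j assume "j \<in> {1..K}"
    then have "\<bar>c s\<bar> \<le> \<bar>c j\<bar>"
      using K by (intro abs_le_if_abs_decreasing[where r=r and c=c, OF dec]) auto
    then show "(c s)\<^sup>2 \<le> (c j)\<^sup>2"
      by (simp add: abs_le_square_iff)
  qed
  also have "\<dots> \<le> (\<Sum>j=1..r. (c j)\<^sup>2)"
    using K by (intro sum_mono2) auto
  finally have "(c s)\<^sup>2 * K \<le> L"
    using sum by (simp add: mult.commute)
  then show ?thesis
    using K by (simp add: pos_le_divide_eq)
qed

lemma summable_square_limit: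
  fixes c :: "nat \<Rightarrow> nat \<Rightarrow> real"
  assumes r: "filterlim r at_top sequentially"
    and bound: "\<And>n. (\<Sum>s=1..r n. (c s n)\<^sup>2) \<le> L"
    and lim: "\<And>s. 1 \<le> s \<Longrightarrow> (\<lambda>n. c s n) \<longlonglongrightarrow> cl s"
  shows "summable (\<lambda>s. (cl (Suc s))\<^sup>2)"
proof (rule summableI_nonneg_bounded)
  fix N
  have "(\<lambda>n. \<Sum>s=1..N. (c s n)\<^sup>2) \<longlonglongrightarrow> (\<Sum>s=1..N. (cl s)\<^sup>2)"
    by (intro tendsto_sum tendsto_power lim) auto
  moreover have "\<forall>\<^sub>F n in sequentially. (\<Sum>s=1..N. (c s n)\<^sup>2) \<le> L"
    using filterlim_at_top[THEN iffD1, OF r, rule_format, of N]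
  proof eventually_elim
    case (elim n)
    then have "(\<Sum>s=1..N. (c s n)\<^sup>2) \<le> (\<Sum>s=1..r n. (c s n)\<^sup>2)"
      by (intro sum_mono2) auto
    then show ?case using bound[of n] by linarith
  qed
  ultimately have "(\<Sum>s=1..N. (cl s)\<^sup>2) \<le> L"
    by (rule tendsto_upperbound) simp
  then show "(\<Sum>s<N. (cl (Suc s))\<^sup>2) \<le> L"
    by (simp add: sum.atLeast1_atMost_eq)
qed simp

lemma (in prob_space) indep_vars_reindex:
  assumes f: "inj_on f I" and indep: "indep_vars M' X (f ` I)"
  shows "indep_vars (\<lambda>i. M' (f i)) (\<lambda>i. X (f i)) I"
  unfolding indep_vars_def
proof safe
  show "random_variable (M' (f i)) (X (f i))" if "i \<in> I" for i
    using indep that unfolding indep_vars_def by auto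
  let ?F = "\<lambda>k. sigma_sets (space M) {X k -` A \<inter> space M |A. A \<in> sets (M' k)}"
  have F: "indep_sets ?F (f ` I)"
    using indep unfolding indep_vars_def by auto
  show "indep_sets (\<lambda>i. ?F (f i)) I"
  proof (rule indep_setsI)
    show "?F (f i) \<subseteq> events" if "i \<in> I" for i
      using F that unfolding indep_sets_def by auto
    fix A J assume J: "J \<noteq> {}" "J \<subseteq> I" "finite J" and A: "\<forall>j\<in>J. A j \<in> ?F (f j)"
    have inj: "inj_on f J" using f J(2) by (rule inj_on_subset)
    let ?A = "\<lambda>k. A (inv_into J f k)"
    have "prob (\<Inter>k\<in>f ` J. ?A k) = (\<Prod>k\<in>f ` J. prob (?A k))"
      using J A inj by (intro indep_setsD[OF F]) auto
    then show "prob (\<Inter>j\<in>J. A j) = (\<Prod>j\<in>J. prob (A j))"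
      using inj by (simp add: prod.reindex)
  qed
qed

lemma same_distr_integrable_iff:
  fixes X X' :: "'a \<Rightarrow> real" and f :: "real \<Rightarrow> real"
  assumes [measurable]: "X \<in> borel_measurable M" "X' \<in> borel_measurable M" "f \<in> borel_measurable borel"
    and distr: "distr M borel X = distr M borel X'"
  shows "integrable M (\<lambda>x. f (X x)) \<longleftrightarrow> integrable M (\<lambda>x. f (X' x))"
proof -
  have "integrable M (\<lambda>x. f (X x)) \<longleftrightarrow> integrable (distr M borel X) f"
    by (simp add: integrable_distr_eq)
  also have "\<dots> \<longleftrightarrow> integrable M (\<lambda>x. f (X' x))"
    unfolding distr by (simp add: integrable_distr_eq)
  finally show ?thesis .
qed

lemma same_distr_integral_eq:
  fixes X X' :: "'a \<Rightarrow> real" and f :: "real \<Rightarrow> real"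
  assumes [measurable]: "X \<in> borel_measurable M" "X' \<in> borel_measurable M" "f \<in> borel_measurable borel"
    and distr: "distr M borel X = distr M borel X'"
  shows "(\<integral>x. f (X x) \<partial>M) = (\<integral>x. f (X' x) \<partial>M)"
proof -
  have "(\<integral>x. f (X x) \<partial>M) = integral\<^sup>L (distr M borel X) f"
    by (simp add: integral_distr)
  also have "\<dots> = (\<integral>x. f (X' x) \<partial>M)"
    unfolding distr by (simp add: integral_distr)
  finally show ?thesis .
qed

locale weighted_iid_array = prob_space M for M :: "'a measure" +
  fixes r :: "nat \<Rightarrow> nat" and c :: "nat \<Rightarrow> nat \<Rightarrow> real" and cl :: "nat \<Rightarrow> real"
    and L \<rho> :: real and Y :: "nat \<Rightarrow> 'a \<Rightarrow> real"
  assumes r_lim: "filterlim r at_top sequentially"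
    and mono_abs: "\<And>n s. 1 \<le> s \<Longrightarrow> s < r n \<Longrightarrow> \<bar>c (Suc s) n\<bar> \<le> \<bar>c s n\<bar>"
    and sum_bound: "\<And>n. (\<Sum>s=1..r n. (c s n)\<^sup>2) \<le> L"
    and c_lim: "\<And>s. 1 \<le> s \<Longrightarrow> (\<lambda>n. c s n) \<longlonglongrightarrow> cl s"
    and tail_limsup: "(\<lambda>K. limsup (\<lambda>n. ereal (\<Sum>s=K+1..r n. (c s n)\<^sup>2))) \<longlonglongrightarrow> ereal (\<rho>\<^sup>2)"
    and tail_liminf: "(\<lambda>K. liminf (\<lambda>n. ereal (\<Sum>s=K+1..r n. (c s n)\<^sup>2))) \<longlonglongrightarrow> ereal (\<rho>\<^sup>2)"
    and Y_indep: "indep_vars (\<lambda>_. borel) Y {1..}"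
    and Y_ident: "\<And>s. 1 \<le> s \<Longrightarrow> distr M borel (Y s) = distr M borel (Y 1)"
    and Y_sq_int: "integrable M (\<lambda>x. (Y 1 x)\<^sup>2)"
    and Y_mean: "expectation (Y 1) = 0"
    and Y_var: "expectation (\<lambda>x. (Y 1 x)\<^sup>2) = 1"
begin

abbreviation \<phi> :: "real \<Rightarrow> complex" where
  "\<phi> \<equiv> char (distr M borel (Y 1))"

abbreviation X :: "nat \<Rightarrow> 'a \<Rightarrow> real" where
  "X n x \<equiv> \<Sum>s=1..r n. c s n * Y s x"

abbreviation series :: "'a \<Rightarrow> real" where
  "series x \<equiv> \<Sum>s. cl (Suc s) * Y (Suc s) x"

lemma Y_measurable: "1 \<le> s \<Longrightarrow> Y s \<in> borel_measurable M"
  using Y_indep unfolding indep_vars_def by auto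

lemma Y_Suc_measurable [measurable]: "Y (Suc s) \<in> borel_measurable M"
  and Y_one_measurable [measurable]: "Y 1 \<in> borel_measurable M"
  by (auto intro: Y_measurable)

lemma X_measurable [measurable]: "X n \<in> borel_measurable M"
  by (intro borel_measurable_sum borel_measurable_times borel_measurable_const Y_measurable) auto

lemma real_distribution_Y: "real_distribution (distr M borel (Y 1))"
  by simp

lemma L_nonneg: "0 \<le> L"
  using sum_bound[of 0] sum_nonneg[of "{1..r 0}" "\<lambda>s. (c s 0)\<^sup>2"] by simp

lemma Y_moments:
  assumes "1 \<le> s"
  shows "integrable M (\<lambda>x. (Y s x)\<^sup>2)" "expectation (Y s) = 0" "expectation (\<lambda>x. (Y s x)\<^sup>2) = 1"
proof -
  have id: "(\<lambda>y::real. y) \<in> borel_measurable borel" and square: "(\<lambda>y::real. y\<^sup>2) \<in> borel_measurable borel"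
    by simp_all
  note same = Y_measurable[OF assms] Y_one_measurable
  show "integrable M (\<lambda>x. (Y s x)\<^sup>2)"
    using same_distr_integrable_iff[OF same square Y_ident[OF assms]] Y_sq_int by simp
  show "expectation (Y s) = 0"
    using same_distr_integral_eq[OF same id Y_ident[OF assms]] Y_mean by simp
  show "expectation (\<lambda>x. (Y s x)\<^sup>2) = 1"
    using same_distr_integral_eq[OF same square Y_ident[OF assms]] Y_var by simp
qed

lemma AE_summable_series: "AE x in M. summable (\<lambda>s. cl (Suc s) * Y (Suc s) x)"
proof -
  have "Suc ` UNIV = {1..}"
    using greaterThan_0 atLeast_Suc_greaterThan[of 0] by simp
  then have "indep_vars (\<lambda>_. borel) (\<lambda>s. Y (Suc s)) UNIV"
    using indep_vars_reindex[of Suc UNIV "\<lambda>_. borel" Y] Y_indep by simp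
  then have indep: "indep_vars (\<lambda>_. borel) (\<lambda>s x. cl (Suc s) * Y (Suc s) x) UNIV"
    by (rule indep_vars_compose2[where Y="\<lambda>s y. cl (Suc s) * y"]) simp
  have "summable (\<lambda>s. (cl (Suc s))\<^sup>2)"
    using r_lim sum_bound c_lim by (rule summable_square_limit)
  then show ?thesis
    by (intro kolmogorov_convergence_criterion[OF indep])
       (simp_all add: power_mult_distrib Y_moments)
qed

lemma char_weighted_sum:
  assumes "S \<subseteq> {1..}"
  shows "char (distr M borel (\<lambda>x. \<Sum>s\<in>S. a s * Y s x)) t = (\<Prod>s\<in>S. \<phi> (t * a s))"
proof (rule char_distr_weighted_sum[OF Y_indep assms])
  show "distr M borel (Y s) = distr M borel (Y 1)" if "s \<in> S" for s
    using that assms by (intro Y_ident) auto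
qed

lemma char_head_tendsto: "(\<lambda>n. \<Prod>s=1..K. \<phi> (t * c s n)) \<longlonglongrightarrow> (\<Prod>s=1..K. \<phi> (t * cl s))"
  using real_distribution.isCont_char[OF real_distribution_Y]
  by (intro tendsto_prod isCont_tendsto_compose[where g=\<phi>] tendsto_mult tendsto_const c_lim) auto

lemma char_head_limit_tendsto:
  "(\<lambda>K. \<Prod>s=1..K. \<phi> (t * cl s)) \<longlonglongrightarrow> char (distr M borel series) t"
proof -
  have "(\<Prod>s=1..K. \<phi> (t * cl s)) = char (distr M borel (\<lambda>x. \<Sum>s<K. cl (Suc s) * Y (Suc s) x)) t" for K
    using char_weighted_sum[of "{1..K}" cl t] by (simp add: sum.atLeast1_atMost_eq)
  moreover have "(\<lambda>K. char (distr M borel (\<lambda>x. \<Sum>s<K. cl (Suc s) * Y (Suc s) x)) t)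
      \<longlonglongrightarrow> char (distr M borel series) t"
  proof (rule char_distr_tendsto)
    show "AE x in M. (\<lambda>K. \<Sum>s<K. cl (Suc s) * Y (Suc s) x) \<longlonglongrightarrow> series x"
      using AE_summable_series by eventually_elim (rule summable_LIMSEQ)
  qed measurable
  ultimately show ?thesis
    by simp
qed

lemma tail_char_approx:
  assumes K: "1 \<le> K" "K \<le> r n"
  shows "cmod ((\<Prod>s=K+1..r n. \<phi> (t * c s n)) - exp (- t\<^sup>2 * (\<Sum>s=K+1..r n. (c s n)\<^sup>2) / 2))
    \<le> L * (t\<^sup>2 / 6 * truncated_third_moment (Y 1) (\<bar>t\<bar> * sqrt (L / K)) + t ^ 4 * (L / K) / 8)"
proof (rule prod_char_approx_normal[OF Y_one_measurable Y_sq_int Y_mean Y_var finite_atLeastAtMost])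
  show "(c s n)\<^sup>2 \<le> L / K" if "s \<in> {K+1..r n}" for s
    using that K by (intro square_le_if_abs_decreasing[where r="r n" and c="\<lambda>s. c s n", OF mono_abs sum_bound]) auto
  show "0 \<le> L / K"
    using L_nonneg by simp
  have "(\<Sum>s=K+1..r n. (c s n)\<^sup>2) \<le> (\<Sum>s=1..r n. (c s n)\<^sup>2)"
    using K by (intro sum_mono2) auto
  then show "(\<Sum>s=K+1..r n. (c s n)\<^sup>2) \<le> L"
    using sum_bound[of n] by linarith
qed

lemma tail_error_tendsto_0:
  "(\<lambda>K. L * (t\<^sup>2 / 6 * truncated_third_moment (Y 1) (\<bar>t\<bar> * sqrt (L / K)) + t ^ 4 * (L / K) / 8))
    \<longlonglongrightarrow> 0"
proof -
  have L_K: "(\<lambda>K. L / real K) \<longlonglongrightarrow> 0"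
    by (intro tendsto_divide_0[OF tendsto_const] filterlim_at_top_imp_at_infinity[OF filterlim_real_sequentially])
  then have "(\<lambda>K. \<bar>t\<bar> * sqrt (L / real K)) \<longlonglongrightarrow> \<bar>t\<bar> * sqrt 0"
    by (intro tendsto_intros)
  then have "(\<lambda>K. truncated_third_moment (Y 1) (\<bar>t\<bar> * sqrt (L / real K))) \<longlonglongrightarrow> 0"
    using L_nonneg by (intro truncated_third_moment_tendsto_0 Y_sq_int) auto
  then have "(\<lambda>K. L * (t\<^sup>2 / 6 * truncated_third_moment (Y 1) (\<bar>t\<bar> * sqrt (L / K)) + t ^ 4 * (L / K) / 8))
      \<longlonglongrightarrow> L * (t\<^sup>2 / 6 * 0 + t ^ 4 * 0 / 8)"
    by (intro tendsto_intros L_K) auto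
  then show ?thesis
    by simp
qed

lemma tail_char_near_normal:
  assumes "e > 0"
  shows "\<forall>\<^sub>F K in sequentially. \<forall>\<^sub>F n in sequentially.
    cmod ((\<Prod>s=K+1..r n. \<phi> (t * c s n)) - exp (- (\<rho> * t)\<^sup>2 / 2)) < e"
proof -
  define f where "f v = complex_of_real (exp (- t\<^sup>2 * v / 2))" for v
  have "isCont f (\<rho>\<^sup>2)"
    unfolding f_def by (intro continuous_intros) auto
  then obtain \<delta> where "\<delta> > 0" and \<delta>: "\<And>v. v \<noteq> \<rho>\<^sup>2 \<Longrightarrow> \<bar>v - \<rho>\<^sup>2\<bar> < \<delta> \<Longrightarrow> cmod (f v - f (\<rho>\<^sup>2)) < e / 2"
    using LIM_D[of f "f (\<rho>\<^sup>2)" "\<rho>\<^sup>2" "e / 2"] \<open>e > 0\<close> unfolding isCont_def by auto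
  have near: "cmod (f v - exp (- (\<rho> * t)\<^sup>2 / 2)) < e / 2" if "\<bar>v - \<rho>\<^sup>2\<bar> < \<delta>" for v
    using \<delta>[OF _ that] \<open>e > 0\<close> by (cases "v = \<rho>\<^sup>2") (auto simp: f_def power_mult_distrib mult.commute)
  have "\<forall>\<^sub>F K in sequentially. L * (t\<^sup>2 / 6 * truncated_third_moment (Y 1) (\<bar>t\<bar> * sqrt (L / K))
      + t ^ 4 * (L / K) / 8) < e / 2"
    using order_tendstoD(2)[OF tail_error_tendsto_0[of t], of "e / 2"] \<open>e > 0\<close> by simp
  moreover have "\<forall>\<^sub>F K in sequentially. \<forall>\<^sub>F n in sequentially. \<bar>(\<Sum>s=K+1..r n. (c s n)\<^sup>2) - \<rho>\<^sup>2\<bar> < \<delta>"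
    using tail_limsup tail_liminf \<open>\<delta> > 0\<close> by (rule eventually_near_of_limsup_liminf)
  moreover have "\<forall>\<^sub>F K in sequentially. 1 \<le> K"
    by (rule eventually_ge_at_top)
  ultimately show ?thesis
  proof eventually_elim
    case (elim K)
    have "\<forall>\<^sub>F n in sequentially. K \<le> r n"
      using r_lim by (simp add: filterlim_at_top)
    with elim(2) show ?case
    proof eventually_elim
      case (elim n)
      have "cmod ((\<Prod>s=K+1..r n. \<phi> (t * c s n)) - f (\<Sum>s=K+1..r n. (c s n)\<^sup>2)) < e / 2"
        using tail_char_approx[OF \<open>1 \<le> K\<close> elim(2), of t] \<open>L * _ < e / 2\<close>
        unfolding f_def by linarith
      then have "cmod ((\<Prod>s=K+1..r n. \<phi> (t * c s n)) - exp (- (\<rho> * t)\<^sup>2 / 2)) < e / 2 + e / 2"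
        using near[OF elim(1)] by (rule norm_diff_triangle_less)
      then show ?case by simp
    qed
  qed
qed

lemma char_tendsto:
  "(\<lambda>n. char (distr M borel (X n)) t) \<longlonglongrightarrow> char (distr M borel series) t * exp (- (\<rho> * t)\<^sup>2 / 2)"
proof (rule tendsto_split_product)
  have "cmod (\<phi> u) \<le> 1" for u
    using real_distribution.cmod_char_le_1[OF real_distribution_Y] .
  then show "cmod (\<Prod>s=1..K. \<phi> (t * c s n)) \<le> 1" for n K
    unfolding prod_norm[symmetric] by (intro prod_le_1) auto
  show "cmod (complex_of_real (exp (- (\<rho> * t)\<^sup>2 / 2))) \<le> 1"
    by simp
  show "\<forall>\<^sub>F n in sequentially. char (distr M borel (X n)) t
      = (\<Prod>s=1..K. \<phi> (t * c s n)) * (\<Prod>s=K+1..r n. \<phi> (t * c s n))" for K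
    using filterlim_at_top[THEN iffD1, OF r_lim, rule_format, of K]
  proof eventually_elim
    case (elim n)
    then have "{1..r n} = {1..K} \<union> {K+1..r n}"
      by auto
    then show ?case
      using char_weighted_sum[of "{1..r n}" "\<lambda>s. c s n" t]
      by (simp add: prod.union_disjoint[symmetric] ivl_disj_int)
  qed
qed (fact char_head_tendsto char_head_limit_tendsto tail_char_near_normal)+

theorem weak_conv:
  "weak_conv_m (\<lambda>n. distr M borel (X n))
     (distr M borel series \<star> distr std_normal_distribution borel (\<lambda>z. \<rho> * z))"
proof (rule levy_continuity)
  show "real_distribution (distr M borel (X n))" for n
    by (intro real_distribution_distr X_measurable)
  show "real_distribution (distr M borel series \<star> distr std_normal_distribution borel (\<lambda>z. \<rho> * z))"
    by (intro real_distribution_convolution real_distribution_scaled_std_normal) simp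
  show "(\<lambda>n. char (distr M borel (X n)) t)
      \<longlonglongrightarrow> char (distr M borel series \<star> distr std_normal_distribution borel (\<lambda>z. \<rho> * z)) t" for t
    using char_tendsto[of t]
    by (simp add: char_convolution real_distribution_scaled_std_normal char_scaled_std_normal)
qed

end

theorem lemma3p15:
  fixes M :: "'a measure"
    and r :: "nat \<Rightarrow> nat"
    and c :: "nat \<Rightarrow> nat \<Rightarrow> real"   (* c s n = c_{s,n} *)
    and cl :: "nat \<Rightarrow> real"          (* cl s = c_s *)
    and L \<rho> :: real
    and Y :: "nat \<Rightarrow> 'a \<Rightarrow> real"
  assumes r_lim: "filterlim r at_top sequentially"
    and mono_abs: "\<And>n s. 1 \<le> s \<Longrightarrow> s < r n \<Longrightarrow> \<bar>c (Suc s) n\<bar> \<le> \<bar>c s n\<bar>"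
    and L_pos: "L > 0"
    and sum_bound: "\<And>n. (\<Sum>s=1..r n. (c s n)\<^sup>2) \<le> L"
    and c_lim: "\<And>s. 1 \<le> s \<Longrightarrow> (\<lambda>n. c s n) \<longlonglongrightarrow> cl s"
    and rho_nonneg: "\<rho> \<ge> 0"
    and tail_limsup: "(\<lambda>K. limsup (\<lambda>n. ereal (\<Sum>s=K+1..r n. (c s n)\<^sup>2))) \<longlonglongrightarrow> ereal (\<rho>\<^sup>2)"
    and tail_liminf: "(\<lambda>K. liminf (\<lambda>n. ereal (\<Sum>s=K+1..r n. (c s n)\<^sup>2))) \<longlonglongrightarrow> ereal (\<rho>\<^sup>2)"
    and P: "prob_space M"
    and Y_meas: "\<And>s. 1 \<le> s \<Longrightarrow> Y s \<in> borel_measurable M"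
    and Y_indep: "prob_space.indep_vars M (\<lambda>_. borel) Y {1..}"
    and Y_ident: "\<And>s. 1 \<le> s \<Longrightarrow> distr M borel (Y s) = distr M borel (Y 1)"
    and Y_int: "integrable M (Y 1)"
    and Y_sq_int: "integrable M (\<lambda>x. (Y 1 x)\<^sup>2)"
    and Y_mean: "(\<integral>x. Y 1 x \<partial>M) = 0"
    and Y_var: "(\<integral>x. (Y 1 x - (\<integral>y. Y 1 y \<partial>M))\<^sup>2 \<partial>M) = 1"
  shows "(AE x in M. summable (\<lambda>s. cl (Suc s) * Y (Suc s) x))
    \<and> (\<lambda>x. \<Sum>s. cl (Suc s) * Y (Suc s) x) \<in> borel_measurable M
    \<and> weak_conv_m (\<lambda>n. distr M borel (\<lambda>x. \<Sum>s=1..r n. c s n * Y s x))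
        (distr M borel (\<lambda>x. \<Sum>s. cl (Suc s) * Y (Suc s) x)
          \<star> distr (density lborel std_normal_density) borel (\<lambda>z. \<rho> * z))"
proof -
  interpret prob_space M by (rule P)
  interpret weighted_iid_array M r c cl L \<rho> Y
  proof unfold_locales
    show "expectation (\<lambda>x. (Y 1 x)\<^sup>2) = 1"
      using Y_var Y_mean by simp
  qed (fact r_lim mono_abs sum_bound c_lim tail_limsup tail_liminf Y_indep Y_ident Y_sq_int Y_mean)+
  \<comment> \<open>\<open>L_pos\<close>, \<open>rho_nonneg\<close>, \<open>Y_meas\<close> and \<open>Y_int\<close> are redundant: \<open>L \<ge> 0\<close> follows from
    \<open>sum_bound\<close>, measurability and integrability from \<open>Y_indep\<close> and \<open>Y_sq_int\<close>, and
    the sign of \<open>\<rho>\<close> does not change the law of \<open>\<rho> Z\<close>.\<close>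
  have "(\<lambda>x. \<Sum>s. cl (Suc s) * Y (Suc s) x) \<in> borel_measurable M"
    by measurable
  with AE_summable_series weak_conv show ?thesis
    by blast
qed

end
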